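(* Let $(\mathcal{S},\mathcal{R})$ be a positive presentation and let $\curvearrowright_r'$ be the binary relation on words on $\mathcal{S}\cup\mathcal{S}^{-1}$ defined as $\curvearrowright_r$ except that in each step the words $u$ and $v$ are required to have length exactly $1$: that is, $\mathbf{w}\curvearrowright_r'\mathbf{w}'$ if $\mathbf{w}'$ is obtained from $\mathbf{w}$ by a finite sequence of steps each of which either deletes a subword $s^{-1}s$ with $s\in\mathcal{S}$, or replaces a subword $s^{-1}t$ with $s,t\in\mathcal{S}$ by a word $v'u'^{-1}$ ($u',v'\in\mathcal{S}^*$) such that $sv'=tu'$ is a relation of $\mathcal{R}$. Then $\curvearrowright_r'$ coincides with $\curvearrowright_r$.
   Context: A positive presentation is a pair $(\mathcal{S},\mathcal{R})$ where $\mathcal{S}$ is a nonempty set of letters and $\mathcal{R}$ is a family of relations $u=v$, i.e. unordered pairs $\{u,v\}$ of nonempty words in the free monoid $\mathcal{S}^*$. Let $\mathcal{S}^{-1}=\{s^{-1}:s\in\mathcal{S}\}$ be a disjoint copy of $\mathcal{S}$; for $u\in\mathcal{S}^*$, $u^{-1}$ is obtained by reversing the order of the letters of $u$ and replacing each $s$ by $s^{-1}$. Right reversing: for words $\mathbf{w},\mathbf{w}'$ on $\mathcal{S}\cup\mathcal{S}^{-1}$ we write $\mathbf{w}\curvearrowright_r\mathbf{w}'$ if $\mathbf{w}'$ is obtained from $\mathbf{w}$ by a finite (possibly empty) sequence of steps, each of which either deletes a subword $u^{-1}u$ with $u\in\mathcal{S}^*$ nonempty, or replaces a subword $u^{-1}v$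 with $u,v\in\mathcal{S}^*$ nonempty by a word $v'u'^{-1}$ with $u',v'\in\mathcal{S}^*$ such that $uv'=vu'$ is a relation of $\mathcal{R}$. *)

theory Defs
  imports Main
begin

text \<open>Letters of S \<union> S^-1: Pos s stands for s, Neg s for s^-1.
  The alphabet S is the (nonempty) type 'a; words are lists.\<close>
datatype 'a sletter = Pos 'a | Neg 'a

definition pw :: "'a list \<Rightarrow> 'a sletter list" where
  "pw u = map Pos u"

definition inv_word :: "'a list \<Rightarrow> 'a sletter list" where
  "inv_word u = rev (map Neg u)"

text \<open>A family of relations is a set of pairs (u,v) read as unordered pairs {u,v}.\<close>
definition is_rel :: "('a list \<times> 'a list) set \<Rightarrow> 'a list \<Rightarrow> 'a list \<Rightarrow> bool" where
  "is_rel R p q \<longleftrightarrow> (p, q) \<in> R \<or> (q, p) \<in> R"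

definition positive_presentation :: "('a list \<times> 'a list) set \<Rightarrow> bool" where
  "positive_presentation R \<longleftrightarrow> (\<forall>(u, v) \<in> R. u \<noteq> [] \<and> v \<noteq> [])"

definition rev_step :: "(nat \<Rightarrow> nat \<Rightarrow> bool) \<Rightarrow> ('a list \<times> 'a list) set
    \<Rightarrow> 'a sletter list \<Rightarrow> 'a sletter list \<Rightarrow> bool" where
  "rev_step P R w w' \<longleftrightarrow>
     (\<exists>x y u v. w = x @ inv_word u @ pw v @ y \<and> u \<noteq> [] \<and> v \<noteq> [] \<and>
        P (length u) (length v) \<and>
        ((u = v \<and> w' = x @ y) \<or>
         (\<exists>u' v'. is_rel R (u @ v') (v @ u') \<and> w' = x @ pw v' @ inv_word u' @ y)))"

definition right_rev :: "('a list \<times> 'a list) set \<Rightarrow> 'a sletter list \<Rightarrow> 'a sletter list \<Rightarrow> bool" where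
  "right_rev R = (rev_step (\<lambda>_ _. True) R)\<^sup>*\<^sup>*"

definition right_rev1 :: "('a list \<times> 'a list) set \<Rightarrow> 'a sletter list \<Rightarrow> 'a sletter list \<Rightarrow> bool" where
  "right_rev1 R = (rev_step (\<lambda>m n. m = 1 \<and> n = 1) R)\<^sup>*\<^sup>*"

end

theory Submission
  imports Defs
begin

text \<open>A general step turns \<open>u\<inverse> v\<close>, with \<open>u = a u\<^sub>1\<close> and \<open>v = b v\<^sub>1\<close>, into \<open>v' u'\<inverse>\<close>
  where \<open>u v' = v u'\<close> is a relation. The same relation, read as \<open>a (u\<^sub>1 v') = b (v\<^sub>1 u')\<close>,
  licenses the letter step \<open>a\<inverse> b \<mapsto> (u\<^sub>1 v') (v\<^sub>1 u')\<inverse>\<close>, which leaves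
  \<open>u\<^sub>1\<inverse> u\<^sub>1 v' u'\<inverse> v\<^sub>1\<inverse> v\<^sub>1\<close>; cancelling \<open>u\<^sub>1\<inverse> u\<^sub>1\<close> and \<open>v\<^sub>1\<inverse> v\<^sub>1\<close> letter by letter
  gives \<open>v' u'\<inverse>\<close>. Deletions of \<open>u\<inverse> u\<close> are letter-by-letter cancellations as well.\<close>

abbreviation letter_step :: "('a list \<times> 'a list) set \<Rightarrow> 'a sletter list \<Rightarrow> 'a sletter list \<Rightarrow> bool" where
  "letter_step \<equiv> rev_step (\<lambda>m n. m = 1 \<and> n = 1)"

lemma rev_step_mono:
  assumes "\<And>m n. P m n \<Longrightarrow> Q m n"
  shows "rev_step P R \<le> rev_step Q R"
  using assms unfolding rev_step_def by blast

lemma letter_step_cancel: "letter_step R (x @ Neg a # Pos a # y) (x @ y)"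
  unfolding rev_step_def
  by (rule exI[of _ x], rule exI[of _ y], rule exI[of _ "[a]"], rule exI[of _ "[a]"])
     (simp add: inv_word_def pw_def)

lemma letter_step_relation:
  assumes "is_rel R (a # v') (b # u')"
  shows "letter_step R (x @ Neg a # Pos b # y) (x @ pw v' @ inv_word u' @ y)"
  unfolding rev_step_def
  by (rule exI[of _ x], rule exI[of _ y], rule exI[of _ "[a]"], rule exI[of _ "[b]"])
     (use assms in \<open>auto simp: inv_word_def pw_def\<close>)

lemma right_rev1_cancel: "right_rev1 R (x @ inv_word u @ pw u @ y) (x @ y)"
proof (induction u arbitrary: y)
  case Nil
  then show ?case by (simp add: right_rev1_def inv_word_def pw_def)
next
  case (Cons a u)
  have "letter_step R (x @ inv_word (a # u) @ pw (a # u) @ y) (x @ inv_word u @ pw u @ y)"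
    using letter_step_cancel[of R "x @ inv_word u" a "pw u @ y"]
    by (simp add: inv_word_def pw_def)
  then show ?case
    using Cons.IH[of y] unfolding right_rev1_def by (rule converse_rtranclp_into_rtranclp)
qed

lemma rev_step_imp_right_rev1:
  assumes "rev_step (\<lambda>_ _. True) R w w'"
  shows "right_rev1 R w w'"
proof -
  from assms obtain x y u v where w: "w = x @ inv_word u @ pw v @ y"
    and "u \<noteq> []" and "v \<noteq> []"
    and cases: "(u = v \<and> w' = x @ y) \<or>
      (\<exists>u' v'. is_rel R (u @ v') (v @ u') \<and> w' = x @ pw v' @ inv_word u' @ y)"
    unfolding rev_step_def by blast
  from cases show ?thesis
  proof (elim disjE exE conjE)
    assume "u = v" and "w' = x @ y"
    then show ?thesis using w right_rev1_cancel by metis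
  next
    fix u' v'
    assume rel: "is_rel R (u @ v') (v @ u')" and w': "w' = x @ pw v' @ inv_word u' @ y"
    obtain a u\<^sub>1 where u: "u = a # u\<^sub>1" using \<open>u \<noteq> []\<close> by (cases u) auto
    obtain b v\<^sub>1 where v: "v = b # v\<^sub>1" using \<open>v \<noteq> []\<close> by (cases v) auto
    let ?tail = "pw v' @ inv_word u' @ inv_word v\<^sub>1 @ pw v\<^sub>1 @ y"
    have "letter_step R w (x @ inv_word u\<^sub>1 @ pw u\<^sub>1 @ ?tail)"
      using letter_step_relation[of R a "u\<^sub>1 @ v'" b "v\<^sub>1 @ u'" "x @ inv_word u\<^sub>1" "pw v\<^sub>1 @ y"] rel
      by (simp add: w u v inv_word_def pw_def)
    moreover have "right_rev1 R (x @ inv_word u\<^sub>1 @ pw u\<^sub>1 @ ?tail) (x @ ?tail)"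
      by (rule right_rev1_cancel)
    moreover have "right_rev1 R (x @ ?tail) w'"
      using right_rev1_cancel[of R "x @ pw v' @ inv_word u'" v\<^sub>1 y] by (simp add: w')
    ultimately show ?thesis
      unfolding right_rev1_def by (meson converse_rtranclp_into_rtranclp rtranclp_trans)
  qed
qed

theorem lemma1p4:
  fixes R :: "('a list \<times> 'a list) set"
  assumes "positive_presentation R"
  shows "right_rev1 R = right_rev R"
  unfolding right_rev1_def right_rev_def
proof (rule rtranclp_subset[symmetric])
  show "letter_step R \<le> rev_step (\<lambda>_ _. True) R"
    by (rule rev_step_mono) simp
  show "rev_step (\<lambda>_ _. True) R \<le> (letter_step R)\<^sup>*\<^sup>*"
    using rev_step_imp_right_rev1 unfolding right_rev1_def by blast
qed

end
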